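(* Let $\mathcal{P}=((v_1,\dots,v_p),(v'_0,\dots,v'_{p+1}))$ be a dangerous caterpillar structure for an assignment $(x,y)$. Let $i$ be an index with $v_i\in\Gamma(\mathcal{P})$ and $L(v_i)=\min_{v\in\Gamma(\mathcal{P})}L(v)$, and let $j\in\{0,\dots,p+1\}$ be an index with $v'_j\ne\mathrm{nil}$ and $L(v'_j)>L(v_i)$. Then for every $a$ with $1\le a\le p$ and $\min(i,j)\le a\le\max(i,j)$ we have $L(v_a)\ge L(v_i)$.
   Context: $G=(V,E)$ undirected unweighted, $\mathrm{dist}_G$ shortest-path distance, $L:V\to\mathbb{N}$. An assignment is $x:V\times V\to\mathbb{R}_{\ge0}$, $y:V\to\mathbb{R}_{\ge0}$. A $\delta$-caterpillar structure for $(x,y)$ is a sequence of distinct vertices $P=(v_1,\dots,v_p)$ with a sequence $P'=(v'_0,\dots,v'_{p+1})$ such that: (i) $y_{v_i}=1$ for $i=1..p$; (ii) $\mathrm{dist}_G(v_i,v_{i+1})\le\delta$ for $i=1..p-1$; (iii) each $v'_i$ is $\mathrm{nil}$ or a vertex not in $\{v_1,\dots,v_p\}$; (iv) for $1\le i\le p$, if $v'_i\ne\mathrm{nil}$ then $L(v_i)\ge L(v'_i)$, $0<y_{v'_i}<1$, $\mathrm{dist}_G(v_i,v'_i)\le\delta$; (v) if $v'_0\ne\mathrm{nil}$ then $\mathrm{dist}_G(v'_0,v_1)\le\delta$ and $0<y_{v'_0}<1$; (vi) if $v'_{p+1}\ne\mathrm{nil}$ then $\mathrm{dist}_G(v'_{p+1},v_p)\le\delta$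 and $0<y_{v'_{p+1}}<1$; (vii) non-nil entries of $P'$ are pairwise distinct; (viii) $\sum_{v\in V(P')}y_v$ is an integer, where $V(P')$ is the set of non-nil entries. For such $\mathcal{P}$, $\Gamma(\mathcal{P})$ is the set of $v_i$ ($1\le i\le p$) for which there exist $0\le i_0<i<i_1\le p+1$ with $v'_{i_0}\ne\mathrm{nil}$, $L(v'_{i_0})>L(v_i)$, $v'_{i_1}\ne\mathrm{nil}$, $L(v'_{i_1})>L(v_i)$. $\mathcal{P}$ is safe if $\Gamma(\mathcal{P})=\emptyset$ and dangerous otherwise. *)

theory Defs
  imports Main "HOL-Library.Extended_Nat"
begin

definition graph :: "'v set \<Rightarrow> ('v \<times> 'v) set \<Rightarrow> bool" where
  "graph V E \<longleftrightarrow> finite V \<and> E \<subseteq> V \<times> V \<and> sym E \<and> irrefl E"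

definition walk :: "'v set \<Rightarrow> ('v \<times> 'v) set \<Rightarrow> 'v list \<Rightarrow> bool" where
  "walk V E ws \<longleftrightarrow> ws \<noteq> [] \<and> set ws \<subseteq> V \<and>
     (\<forall>k. Suc k < length ws \<longrightarrow> (ws ! k, ws ! Suc k) \<in> E)"

text \<open>Shortest-path distance (infinite if no path).\<close>
definition dist :: "'v set \<Rightarrow> ('v \<times> 'v) set \<Rightarrow> 'v \<Rightarrow> 'v \<Rightarrow> enat" where
  "dist V E u v = (INF ws \<in> {ws. walk V E ws \<and> hd ws = u \<and> last ws = v}. enat (length ws - 1))"

definition assignment :: "'v set \<Rightarrow> ('v \<Rightarrow> 'v \<Rightarrow> real) \<Rightarrow> ('v \<Rightarrow> real) \<Rightarrow> bool" where
  "assignment V x y \<longleftrightarrow> (\<forall>u\<in>V. \<forall>v\<in>V. x u v \<ge> 0) \<and> (\<forall>v\<in>V. y v \<ge> 0)"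

text \<open>Caterpillar: P i = v_i for i = 1..p, P' i = v'_i for i = 0..p+1 (None = nil).\<close>
definition VP' :: "nat \<Rightarrow> (nat \<Rightarrow> 'v option) \<Rightarrow> 'v set" where
  "VP' p P' = {v. \<exists>i\<in>{0..p+1}. P' i = Some v}"

definition caterpillar ::
  "'v set \<Rightarrow> ('v \<times> 'v) set \<Rightarrow> ('v \<Rightarrow> nat) \<Rightarrow> nat \<Rightarrow> ('v \<Rightarrow> 'v \<Rightarrow> real) \<Rightarrow> ('v \<Rightarrow> real)
   \<Rightarrow> nat \<Rightarrow> (nat \<Rightarrow> 'v) \<Rightarrow> (nat \<Rightarrow> 'v option) \<Rightarrow> bool" where
  "caterpillar V E L \<delta> x y p P P' \<longleftrightarrow>
     P ` {1..p} \<subseteq> V \<and> inj_on P {1..p} \<and>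
     (\<forall>i\<in>{1..p}. y (P i) = 1) \<and>
     (\<forall>i\<in>{1..<p}. dist V E (P i) (P (Suc i)) \<le> enat \<delta>) \<and>
     (\<forall>i\<in>{0..p+1}. \<forall>w. P' i = Some w \<longrightarrow> w \<in> V \<and> w \<notin> P ` {1..p}) \<and>
     (\<forall>i\<in>{1..p}. \<forall>w. P' i = Some w \<longrightarrow>
         L (P i) \<ge> L w \<and> 0 < y w \<and> y w < 1 \<and> dist V E (P i) w \<le> enat \<delta>) \<and>
     (\<forall>w. P' 0 = Some w \<longrightarrow> dist V E w (P 1) \<le> enat \<delta> \<and> 0 < y w \<and> y w < 1) \<and>
     (\<forall>w. P' (p+1) = Some w \<longrightarrow> dist V E w (P p) \<le> enat \<delta> \<and> 0 < y w \<and> y w < 1) \<and>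
     (\<forall>i\<in>{0..p+1}. \<forall>k\<in>{0..p+1}. i \<noteq> k \<longrightarrow> P' i \<noteq> None \<longrightarrow> P' i \<noteq> P' k) \<and>
     (\<Sum>v\<in>VP' p P'. y v) \<in> \<int>"

definition Gamma :: "('v \<Rightarrow> nat) \<Rightarrow> nat \<Rightarrow> (nat \<Rightarrow> 'v) \<Rightarrow> (nat \<Rightarrow> 'v option) \<Rightarrow> 'v set" where
  "Gamma L p P P' = {P i | i. i \<in> {1..p} \<and>
     (\<exists>i0 i1 w0 w1. i0 < i \<and> i < i1 \<and> i1 \<le> p+1 \<and>
        P' i0 = Some w0 \<and> L w0 > L (P i) \<and> P' i1 = Some w1 \<and> L w1 > L (P i))}"

definition dangerous :: "('v \<Rightarrow> nat) \<Rightarrow> nat \<Rightarrow> (nat \<Rightarrow> 'v) \<Rightarrow> (nat \<Rightarrow> 'v option) \<Rightarrow> bool" where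
  "dangerous L p P P' \<longleftrightarrow> Gamma L p P P' \<noteq> {}"

end

theory Submission
  imports Defs
begin

(* Membership of v_k in Gamma means that v_k is flanked on both
   sides by legs v'_{i0}, v'_{i1} (i0 < k < i1) whose labels exceed L(v_k).  Such a
   pair of flanking legs propagates downwards in label: if v_i is flanked and v'_j is a
   leg with L(v'_j) > L(v_i), then every spine vertex v_a strictly between i and j with
   L(v_a) < L(v_i) is flanked as well -- on the side of j by v'_j, on the other side by
   the leg flanking v_i there.  Hence a vertex between i and j of smaller label would
   lie in Gamma below its minimum.  The endpoint a = i is trivial, and a = j is excluded
   because a leg attached to v_j never has a larger label than v_j itself. *)

text \<open>Gamma consists of spine vertices, so it is finite; this makes its minimum meaningful.\<close>
lemma finite_Gamma: "finite (Gamma L p P P')"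
proof (rule finite_subset)
  show "Gamma L p P P' \<subseteq> P ` {1..p}" unfolding Gamma_def by auto
qed simp

lemma Gamma_memI:
  assumes "k \<in> {1..p}" and "i0 < k" and "k < i1" and "i1 \<le> p + 1"
    and "P' i0 = Some w0" and "L w0 > L (P k)" and "P' i1 = Some w1" and "L w1 > L (P k)"
  shows "P k \<in> Gamma L p P P'"
  using assms unfolding Gamma_def by blast

text \<open>Elimination rule: since the spine is injective, membership of P i in Gamma
  yields flanking legs around the index i itself (not merely around some index
  carrying the same vertex).\<close>
lemma Gamma_memE:
  assumes "inj_on P {1..p}" and "i \<in> {1..p}" and "P i \<in> Gamma L p P P'"
  obtains i0 i1 w0 w1 where "i0 < i" and "i < i1" and "i1 \<le> p + 1"
    and "P' i0 = Some w0" and "L w0 > L (P i)" and "P' i1 = Some w1" and "L w1 > L (P i)"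
proof -
  obtain k i0 i1 w0 w1 where k: "P i = P k" "k \<in> {1..p}" and flank: "i0 < k" "k < i1"
    "i1 \<le> p + 1" "P' i0 = Some w0" "L w0 > L (P k)" "P' i1 = Some w1" "L w1 > L (P k)"
    using assms(3) unfolding Gamma_def by blast
  have "k = i" using k assms(1,2) by (metis inj_onD)
  with flank that show thesis by blast
qed

lemma caterpillar_leg_label_le:
  assumes "caterpillar V E L \<delta> x y p P P'" and "k \<in> {1..p}" and "P' k = Some u"
  shows "L u \<le> L (P k)"
  using assms unfolding caterpillar_def by blast

lemma Gamma_propagates_between:
  assumes inj: "inj_on P {1..p}" and i: "i \<in> {1..p}" and Gi: "P i \<in> Gamma L p P P'"
    and j: "j \<le> p + 1" "P' j = Some w" "L w > L (P i)"
    and a: "a \<in> {1..p}" "min i j < a" "a < max i j"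
    and lower: "L (P a) < L (P i)"
  shows "P a \<in> Gamma L p P P'"
proof -
  obtain i0 i1 w0 w1 where flank: "i0 < i" "i < i1" "i1 \<le> p + 1"
    "P' i0 = Some w0" "L w0 > L (P i)" "P' i1 = Some w1" "L w1 > L (P i)"
    using Gamma_memE[OF inj i Gi] by blast
  show ?thesis
  proof (cases "j < i")
    case True
    then have "j < a" "a < i1" using a flank by auto
    then show ?thesis
      using Gamma_memI[OF a(1) _ _ flank(3) j(2) _ flank(6)] j(3) flank(7) lower by simp
  next
    case False
    then have "i0 < a" "a < j" using a flank by auto
    then show ?thesis
      using Gamma_memI[OF a(1) _ _ j(1) flank(4) _ j(2)] j(3) flank(5) lower by simp
  qed
qed

theorem mainTheorem13:
  fixes V :: "'v set" and E :: "('v \<times> 'v) set" and L :: "'v \<Rightarrow> nat" and \<delta> :: nat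
    and x :: "'v \<Rightarrow> 'v \<Rightarrow> real" and y :: "'v \<Rightarrow> real"
    and p :: nat and P :: "nat \<Rightarrow> 'v" and P' :: "nat \<Rightarrow> 'v option"
    and i j a :: nat and w :: 'v
  assumes "graph V E"
    and "assignment V x y"
    and "caterpillar V E L \<delta> x y p P P'"
    and "dangerous L p P P'"
    and "i \<in> {1..p}" and "P i \<in> Gamma L p P P'"
    and "L (P i) = Min (L ` Gamma L p P P')"
    and "j \<le> p + 1" and "P' j = Some w" and "L w > L (P i)"
    and "1 \<le> a" and "a \<le> p" and "min i j \<le> a" and "a \<le> max i j"
  shows "L (P a) \<ge> L (P i)"
proof (rule ccontr)
  assume lower: "\<not> L (P a) \<ge> L (P i)"
  have inj: "inj_on P {1..p}" using assms(3) unfolding caterpillar_def by blast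
  have a_range: "a \<in> {1..p}" using assms(11,12) by simp
  have "a \<noteq> j"
    using caterpillar_leg_label_le[OF assms(3) a_range] assms(9,10) lower by auto
  moreover have "a \<noteq> i" using lower by auto
  ultimately have "P a \<in> Gamma L p P P'"
    using Gamma_propagates_between[OF inj assms(5,6,8,9,10) a_range] assms(13,14) lower
    by (simp add: min_def max_def split: if_splits)
  then have "Min (L ` Gamma L p P P') \<le> L (P a)" by (simp add: finite_Gamma)
  then show False using lower assms(7) by simp
qed

end
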